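(* Let $\overline{n}=(n_1,\ldots,n_r)$ with $1\le n_1\le\cdots\le n_r$. Then $\mathrm{cat}(\mathrm{P}_{\overline{n}})<(n_1+1)\,r$.
   Context: $\mathrm{P}_{\overline{n}}$ is the quotient of $S^{n_1}\times\cdots\times S^{n_r}$ by the diagonal $\mathbb{Z}_2$-action which is antipodal on each factor. $\mathrm{cat}$ denotes the reduced Lusternik–Schnirelmann category: one less than the minimal number of open sets covering the space, each contractible in the space (so a contractible space has $\mathrm{cat}=0$). *)

theory Defs
  imports "HOL-Analysis.Analysis"
begin

definition quotient_topology :: "'a topology \<Rightarrow> ('a \<Rightarrow> 'b) \<Rightarrow> 'b topology" where
  "quotient_topology X f =
     topology (\<lambda>U. U \<subseteq> f ` topspace X \<and> openin X {x \<in> topspace X. f x \<in> U})"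

definition sphere_product :: "nat list \<Rightarrow> (nat \<Rightarrow> nat \<Rightarrow> real) topology" where
  "sphere_product ns = product_topology (\<lambda>k. nsphere (ns ! k)) {..<length ns}"

definition diag_antipodal :: "nat list \<Rightarrow> (nat \<Rightarrow> nat \<Rightarrow> real) \<Rightarrow> (nat \<Rightarrow> nat \<Rightarrow> real)" where
  "diag_antipodal ns x = restrict (\<lambda>k. - x k) {..<length ns}"

definition projective_product :: "nat list \<Rightarrow> (nat \<Rightarrow> nat \<Rightarrow> real) set topology" where
  "projective_product ns =
     quotient_topology (sphere_product ns) (\<lambda>x. {x, diag_antipodal ns x})"

definition contractible_in :: "'a topology \<Rightarrow> 'a set \<Rightarrow> bool" where
  "contractible_in X U \<longleftrightarrow>
     (\<exists>a. homotopic_with (\<lambda>_. True) (subtopology X U) X id (\<lambda>_. a))"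

definition LS_cover :: "'a topology \<Rightarrow> nat \<Rightarrow> bool" where
  "LS_cover X k \<longleftrightarrow>
     (\<exists>U :: nat \<Rightarrow> 'a set. (\<forall>i\<le>k. openin X (U i) \<and> contractible_in X (U i)) \<and>
        topspace X \<subseteq> (\<Union>i\<le>k. U i))"

text \<open>Reduced Lusternik-Schnirelmann category (infinity if no finite cover exists).\<close>
definition LS_cat :: "'a topology \<Rightarrow> enat" where
  "LS_cat X = (if \<exists>k. LS_cover X k then enat (LEAST k. LS_cover X k) else \<infinity>)"

end

theory Submission
  imports Defs
begin

text \<open>For \<open>k \<le> n\<^sub>1\<close> and \<open>j < r\<close> let \<open>U\<^sub>k\<^sub>j\<close> be the set of \<open>x \<in> S\<^bsup>n\<^sub>1\<^esup> \<times> \<dots> \<times> S\<^bsup>n\<^sub>r\<^esup>\<close>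
  with \<open>x\<^sub>1(k) > 0\<close> and \<open>x\<^sub>i \<noteq> -c\<^sub>i\<close> for all \<open>i\<close>, where \<open>c\<^sub>1 = e\<^sub>k\<close> and, for \<open>i \<ge> 2\<close>,
  \<open>c\<^sub>i\<close> is the \<open>j\<close>-th of \<open>r\<close> fixed distinct points on a great circle (this needs \<open>n\<^sub>i \<ge> 1\<close>).
  The sign condition makes the orbit map injective (and it is open) on \<open>U\<^sub>k\<^sub>j\<close>, and the
  renormalised straight-line homotopy to \<open>c\<close>, factor by factor, contracts \<open>U\<^sub>k\<^sub>j\<close>; so its
  image is an open set contractible in \<open>P\<^sub>n\<close>. Every orbit meets some \<open>U\<^sub>k\<^sub>j\<close>: choose \<open>k\<close> with
  \<open>x\<^sub>1(k) \<noteq> 0\<close> and replace \<open>x\<close> by \<open>-x\<close> if necessary; then the \<open>r - 1\<close> factors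
  \<open>x\<^sub>2, \<dots>, x\<^sub>r\<close> rule out at most \<open>r - 1\<close> of the \<open>r\<close> values of \<open>j\<close>. These \<open>(n\<^sub>1 + 1) r\<close> sets
  give \<open>cat P\<^sub>n \<le> (n\<^sub>1 + 1) r - 1\<close>. (Below, factors are indexed from \<open>0\<close>.)\<close>

lemma istopology_quotient:
  "istopology (\<lambda>U. U \<subseteq> f ` topspace X \<and> openin X {x \<in> topspace X. f x \<in> U})"
  unfolding istopology_def
proof (rule conjI; intro allI impI)
  fix S T
  assume "S \<subseteq> f ` topspace X \<and> openin X {x \<in> topspace X. f x \<in> S}"
    and "T \<subseteq> f ` topspace X \<and> openin X {x \<in> topspace X. f x \<in> T}"
  moreover have "{x \<in> topspace X. f x \<in> S \<inter> T} =
      {x \<in> topspace X. f x \<in> S} \<inter> {x \<in> topspace X. f x \<in> T}" by auto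
  ultimately show "S \<inter> T \<subseteq> f ` topspace X \<and> openin X {x \<in> topspace X. f x \<in> S \<inter> T}"
    by auto
next
  fix K
  assume K: "\<forall>S\<in>K. S \<subseteq> f ` topspace X \<and> openin X {x \<in> topspace X. f x \<in> S}"
  have "{x \<in> topspace X. f x \<in> \<Union>K} = (\<Union>S\<in>K. {x \<in> topspace X. f x \<in> S})" by auto
  with K show "\<Union>K \<subseteq> f ` topspace X \<and> openin X {x \<in> topspace X. f x \<in> \<Union>K}"
    by auto
qed

lemma openin_quotient_topology:
  "openin (quotient_topology X f) U \<longleftrightarrow>
     U \<subseteq> f ` topspace X \<and> openin X {x \<in> topspace X. f x \<in> U}"
  unfolding quotient_topology_def by (simp add: topology_inverse'[OF istopology_quotient])

lemma topspace_quotient_topology: "topspace (quotient_topology X f) = f ` topspace X"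
proof (rule antisym)
  show "topspace (quotient_topology X f) \<subseteq> f ` topspace X"
    using openin_quotient_topology[of X f "topspace (quotient_topology X f)"] by simp
  have "{x \<in> topspace X. f x \<in> f ` topspace X} = topspace X" by auto
  then have "openin (quotient_topology X f) (f ` topspace X)"
    by (simp add: openin_quotient_topology)
  then show "f ` topspace X \<subseteq> topspace (quotient_topology X f)"
    by (rule openin_subset)
qed

lemma continuous_map_quotient_topology: "continuous_map X (quotient_topology X f) f"
  unfolding continuous_map_def topspace_quotient_topology
  by (auto simp: openin_quotient_topology)

lemma contractible_in_image_open_map:
  assumes q: "continuous_map X Y q" "open_map X Y q"
    and A: "openin X A" and inj: "inj_on q A" and contr: "contractible_in X A"
  shows "contractible_in Y (q ` A)"
proof -
  obtain a where h: "homotopic_with (\<lambda>_. True) (subtopology X A) X id (\<lambda>_. a)"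
    using contr unfolding contractible_in_def by blast
  have topA: "topspace (subtopology X A) = A"
    using openin_subset[OF A] by auto
  have "embedding_map (subtopology X A) Y q"
    using q A inj topA
    by (intro injective_open_imp_embedding_map continuous_map_from_subtopology open_map_from_subtopology) auto
  then obtain s where s: "homeomorphic_maps (subtopology X A) (subtopology Y (q ` A)) q s"
    unfolding embedding_map_def homeomorphic_map_maps topA by blast
  have "homotopic_with (\<lambda>_. True) (subtopology X A) Y (q \<circ> id) (q \<circ> (\<lambda>_. a))"
    using h q(1) by (rule homotopic_with_compose_continuous_map_left) auto
  then have "homotopic_with (\<lambda>_. True) (subtopology Y (q ` A)) Y (q \<circ> s) ((\<lambda>_. q a) \<circ> s)"
    using s unfolding homeomorphic_maps_def
    by (intro homotopic_with_compose_continuous_map_right) (auto simp: o_def)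
  then have "homotopic_with (\<lambda>_. True) (subtopology Y (q ` A)) Y id (\<lambda>_. q a)"
    by (rule homotopic_with_eq) (use s in \<open>auto simp: homeomorphic_maps_def\<close>)
  then show ?thesis
    unfolding contractible_in_def by blast
qed

lemma topspace_nsphere: "topspace (nsphere n) = {x. (\<Sum>i\<le>n. x i ^ 2) = 1 \<and> (\<forall>i>n. x i = 0)}"
  by (simp add: nsphere)

lemma continuous_map_into_nsphere:
  "\<lbrakk>continuous_map Z (powertop_real UNIV) f; f \<in> topspace Z \<rightarrow> topspace (nsphere n)\<rbrakk>
     \<Longrightarrow> continuous_map Z (nsphere n) f"
  unfolding nsphere by (simp add: continuous_map_in_subtopology)

lemma nsphere_segment_nonzero:
  assumes y: "y \<in> topspace (nsphere n)" and c: "c \<in> topspace (nsphere n)" and yc: "y \<noteq> - c"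
    and t: "0 \<le> t" "t \<le> 1"
  shows "(\<Sum>m\<le>n. ((1 - t) * y m + t * c m)^2) > 0"
proof (rule ccontr)
  assume "\<not> ?thesis"
  then have "(\<Sum>m\<le>n. ((1 - t) * y m + t * c m)^2) = 0"
    by (simp add: order_antisym sum_nonneg)
  then have "\<forall>m\<in>{..n}. ((1 - t) * y m + t * c m)^2 = 0"
    by (simp add: sum_nonneg_eq_0_iff)
  then have zero: "(1 - t) * y m = - (t * c m)" if "m \<le> n" for m
    using that by (simp add: add_eq_0_iff)
  have "(1 - t)^2 * (\<Sum>m\<le>n. (y m)^2) = t^2 * (\<Sum>m\<le>n. (c m)^2)"
    by (simp add: power_mult_distrib sum_distrib_left zero flip: power_mult_distrib)
  then have "(1 - t)^2 = t^2"
    using y c by (simp add: topspace_nsphere)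
  then have half: "t = 1/2"
    by (simp add: power2_eq_square algebra_simps)
  have "y m = - c m" for m
    using zero[of m, unfolded half] y c by (cases "m \<le> n") (auto simp: topspace_nsphere)
  with yc show False by auto
qed

definition sphere_contraction :: "nat \<Rightarrow> (nat \<Rightarrow> real) \<Rightarrow> real \<times> (nat \<Rightarrow> real) \<Rightarrow> nat \<Rightarrow> real"
  where "sphere_contraction n c p =
    (\<lambda>l. ((1 - fst p) * snd p l + fst p * c l) /
         sqrt (\<Sum>m\<le>n. ((1 - fst p) * snd p m + fst p * c m)^2))"

lemma sphere_contraction_in_nsphere:
  assumes "y \<in> topspace (nsphere n)" "c \<in> topspace (nsphere n)" "y \<noteq> - c" "0 \<le> t" "t \<le> 1"
  shows "sphere_contraction n c (t, y) \<in> topspace (nsphere n)"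
proof -
  define s where "s = (\<Sum>m\<le>n. ((1 - t) * y m + t * c m)^2)"
  have "s > 0"
    using nsphere_segment_nonzero[OF assms] by (simp add: s_def)
  then have "(\<Sum>i\<le>n. (((1 - t) * y i + t * c i) / sqrt s)^2) = 1"
    by (simp add: power_divide flip: sum_divide_distrib) (simp add: s_def)
  then show ?thesis
    using assms by (simp add: topspace_nsphere sphere_contraction_def s_def)
qed

lemma sphere_contraction_0: "y \<in> topspace (nsphere n) \<Longrightarrow> sphere_contraction n c (0, y) = y"
  by (simp add: topspace_nsphere sphere_contraction_def)

lemma sphere_contraction_1: "c \<in> topspace (nsphere n) \<Longrightarrow> sphere_contraction n c (1, y) = c"
  by (simp add: topspace_nsphere sphere_contraction_def)

lemma continuous_map_sphere_contraction:
  assumes c: "c \<in> topspace (nsphere n)"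
  shows "continuous_map (prod_topology (top_of_set {0..1}) (subtopology (nsphere n) {y. y \<noteq> - c}))
           (nsphere n) (sphere_contraction n c)"
proof -
  let ?Z = "prod_topology (top_of_set {0..1::real}) (subtopology (nsphere n) {y. y \<noteq> - c})"
  have coord: "continuous_map ?Z euclideanreal (\<lambda>p. snd p m)" for m
    using continuous_map_compose[OF continuous_map_snd
        continuous_map_from_subtopology[OF continuous_map_nsphere_projection]]
    by (simp add: o_def)
  have time: "continuous_map ?Z euclideanreal fst"
    using continuous_map_into_fulltopology[OF continuous_map_fst] by blast
  have "sqrt (\<Sum>m\<le>n. ((1 - fst p) * snd p m + fst p * c m)^2) \<noteq> 0" if "p \<in> topspace ?Z" for p
    using that nsphere_segment_nonzero[OF _ c, of "snd p" "fst p"]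
    by (auto simp: topspace_prod_topology)
  then have "continuous_map ?Z (powertop_real UNIV) (sphere_contraction n c)"
    unfolding continuous_map_componentwise_UNIV sphere_contraction_def
    by (intro allI continuous_map_real_divide continuous_intros coord time)
      (simp_all add: continuous_map_const)
  moreover have "sphere_contraction n c \<in> topspace ?Z \<rightarrow> topspace (nsphere n)"
    using sphere_contraction_in_nsphere[OF _ c] by (force simp: topspace_prod_topology)
  ultimately show ?thesis
    by (rule continuous_map_into_nsphere)
qed

lemma topspace_sphere_product:
  "topspace (sphere_product ns) = (\<Pi>\<^sub>E i\<in>{..<length ns}. topspace (nsphere (ns!i)))"
  by (simp add: sphere_product_def)

lemma continuous_map_sphere_product_coordinate:
  "k < length ns \<Longrightarrow> continuous_map (sphere_product ns) euclideanreal (\<lambda>x. x k l)"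
  unfolding sphere_product_def
  using continuous_map_compose[OF continuous_map_product_projection[of k "{..<length ns}" "\<lambda>k. nsphere (ns!k)"]
      continuous_map_nsphere_projection[of "ns!k" l]]
  by (simp add: o_def)

definition sphere_product_contraction ::
    "nat list \<Rightarrow> (nat \<Rightarrow> nat \<Rightarrow> real) \<Rightarrow> real \<times> (nat \<Rightarrow> nat \<Rightarrow> real) \<Rightarrow> nat \<Rightarrow> nat \<Rightarrow> real"
  where "sphere_product_contraction ns c p =
    restrict (\<lambda>i. sphere_contraction (ns!i) (c i) (fst p, snd p i)) {..<length ns}"

lemma continuous_map_sphere_product_contraction:
  assumes c: "\<And>i. i < length ns \<Longrightarrow> c i \<in> topspace (nsphere (ns!i))"
    and A: "A \<subseteq> {x. \<forall>i<length ns. x i \<noteq> - c i}"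
  shows "continuous_map (prod_topology (top_of_set {0..1}) (subtopology (sphere_product ns) A))
           (sphere_product ns) (sphere_product_contraction ns c)"
proof -
  let ?Z = "prod_topology (top_of_set {0..1::real}) (subtopology (sphere_product ns) A)"
  have "continuous_map ?Z (nsphere (ns!i)) (\<lambda>p. sphere_product_contraction ns c p i)"
    if i: "i < length ns" for i
  proof -
    have "continuous_map ?Z (nsphere (ns!i)) (\<lambda>p. snd p i)"
      using continuous_map_compose[OF continuous_map_snd continuous_map_from_subtopology[OF
            continuous_map_product_projection[of i "{..<length ns}" "\<lambda>k. nsphere (ns!k)"]]] i
      by (simp add: o_def sphere_product_def)
    then have "continuous_map ?Z (prod_topology (top_of_set {0..1})
                 (subtopology (nsphere (ns!i)) {y. y \<noteq> - c i})) (\<lambda>p. (fst p, snd p i))"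
      using A i
      by (auto intro!: continuous_map_pairedI continuous_map_fst
               simp: continuous_map_in_subtopology topspace_prod_topology) blast
    then have "continuous_map ?Z (nsphere (ns!i)) (sphere_contraction (ns!i) (c i) \<circ> (\<lambda>p. (fst p, snd p i)))"
      using continuous_map_sphere_contraction[OF c[OF i]] by (rule continuous_map_compose)
    then show ?thesis
      using i by (simp add: o_def sphere_product_contraction_def)
  qed
  then show ?thesis
    using continuous_map_componentwise[of ?Z "\<lambda>k. nsphere (ns!k)" "{..<length ns}"]
    by (auto simp: sphere_product_contraction_def sphere_product_def[symmetric])
qed

lemma contractible_in_sphere_product:
  assumes c: "\<And>i. i < length ns \<Longrightarrow> c i \<in> topspace (nsphere (ns!i))"
    and A: "A \<subseteq> {x. \<forall>i<length ns. x i \<noteq> - c i}"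
  shows "contractible_in (sphere_product ns) A"
proof -
  have "homotopic_with (\<lambda>_. True) (subtopology (sphere_product ns) A) (sphere_product ns)
          id (\<lambda>_. restrict c {..<length ns})"
    unfolding homotopic_with[where P = "\<lambda>_. True", OF refl]
  proof (intro exI[of _ "sphere_product_contraction ns c"] conjI ballI)
    show "continuous_map (prod_topology (top_of_set {0..1}) (subtopology (sphere_product ns) A))
            (sphere_product ns) (sphere_product_contraction ns c)"
      using c A by (rule continuous_map_sphere_product_contraction)
  next
    fix x assume "x \<in> topspace (subtopology (sphere_product ns) A)"
    then show "sphere_product_contraction ns c (0, x) = id x"
      by (auto simp: sphere_product_contraction_def topspace_sphere_product PiE_iff
          sphere_contraction_0 fun_eq_iff extensional_def)
  next
    fix x show "sphere_product_contraction ns c (1, x) = restrict c {..<length ns}"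
      by (auto simp: sphere_product_contraction_def sphere_contraction_1 c)
  qed auto
  then show ?thesis
    unfolding contractible_in_def by blast
qed

lemma diag_antipodal_in_topspace:
  "x \<in> topspace (sphere_product ns) \<Longrightarrow> diag_antipodal ns x \<in> topspace (sphere_product ns)"
  by (auto simp: topspace_sphere_product diag_antipodal_def topspace_nsphere PiE_iff)

lemma diag_antipodal_diag_antipodal:
  "x \<in> topspace (sphere_product ns) \<Longrightarrow> diag_antipodal ns (diag_antipodal ns x) = x"
  by (auto simp: topspace_sphere_product diag_antipodal_def PiE_iff fun_eq_iff extensional_def)

lemma continuous_map_diag_antipodal:
  "continuous_map (sphere_product ns) (sphere_product ns) (diag_antipodal ns)"
proof -
  have "continuous_map (sphere_product ns) (nsphere (ns!k)) (\<lambda>x. diag_antipodal ns x k)"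
    if k: "k < length ns" for k
  proof (rule continuous_map_into_nsphere)
    show "continuous_map (sphere_product ns) (powertop_real UNIV) (\<lambda>x. diag_antipodal ns x k)"
      unfolding continuous_map_componentwise_UNIV diag_antipodal_def
      using k by (auto intro!: continuous_map_minus continuous_map_sphere_product_coordinate)
    show "(\<lambda>x. diag_antipodal ns x k) \<in> topspace (sphere_product ns) \<rightarrow> topspace (nsphere (ns!k))"
      using diag_antipodal_in_topspace k by (auto simp: topspace_sphere_product PiE_iff)
  qed
  then show ?thesis
    using continuous_map_componentwise[of "sphere_product ns" "\<lambda>k. nsphere (ns!k)" "{..<length ns}"]
    by (auto simp: diag_antipodal_def sphere_product_def[symmetric])
qed

abbreviation antipodal_orbit :: "nat list \<Rightarrow> (nat \<Rightarrow> nat \<Rightarrow> real) \<Rightarrow> (nat \<Rightarrow> nat \<Rightarrow> real) set"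
  where "antipodal_orbit ns x \<equiv> {x, diag_antipodal ns x}"

lemma antipodal_orbit_eq_iff:
  assumes "x \<in> topspace (sphere_product ns)" "y \<in> topspace (sphere_product ns)"
  shows "antipodal_orbit ns x = antipodal_orbit ns y \<longleftrightarrow> y = x \<or> y = diag_antipodal ns x"
  using diag_antipodal_diag_antipodal[OF assms(1)] diag_antipodal_diag_antipodal[OF assms(2)]
  by (auto simp: doubleton_eq_iff)

lemma continuous_map_antipodal_orbit:
  "continuous_map (sphere_product ns) (projective_product ns) (antipodal_orbit ns)"
  unfolding projective_product_def by (rule continuous_map_quotient_topology)

lemma open_map_antipodal_orbit:
  "open_map (sphere_product ns) (projective_product ns) (antipodal_orbit ns)"
  unfolding open_map_def
proof (intro allI impI)
  fix V assume V: "openin (sphere_product ns) V"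
  have sub: "V \<subseteq> topspace (sphere_product ns)"
    using openin_subset[OF V] .
  have "{x \<in> topspace (sphere_product ns). antipodal_orbit ns x \<in> antipodal_orbit ns ` V} =
        V \<union> {x \<in> topspace (sphere_product ns). diag_antipodal ns x \<in> V}"
  proof (intro equalityI subsetI)
    fix x assume "x \<in> {x \<in> topspace (sphere_product ns). antipodal_orbit ns x \<in> antipodal_orbit ns ` V}"
    then obtain y where "x \<in> topspace (sphere_product ns)" "y \<in> V" "antipodal_orbit ns x = antipodal_orbit ns y"
      by auto
    then show "x \<in> V \<union> {x \<in> topspace (sphere_product ns). diag_antipodal ns x \<in> V}"
      using sub antipodal_orbit_eq_iff[of x ns y] diag_antipodal_diag_antipodal by auto
  next
    fix x assume "x \<in> V \<union> {x \<in> topspace (sphere_product ns). diag_antipodal ns x \<in> V}"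
    then show "x \<in> {x \<in> topspace (sphere_product ns). antipodal_orbit ns x \<in> antipodal_orbit ns ` V}"
    proof (elim UnE)
      assume "x \<in> V"
      then show ?thesis using sub by auto
    next
      assume x: "x \<in> {x \<in> topspace (sphere_product ns). diag_antipodal ns x \<in> V}"
      then have "antipodal_orbit ns x = antipodal_orbit ns (diag_antipodal ns x)"
        using diag_antipodal_diag_antipodal by auto
      with x show ?thesis by auto
    qed
  qed
  moreover have "openin (sphere_product ns) (V \<union> {x \<in> topspace (sphere_product ns). diag_antipodal ns x \<in> V})"
    using V openin_continuous_map_preimage[OF continuous_map_diag_antipodal V] by (rule openin_Un)
  ultimately show "openin (projective_product ns) (antipodal_orbit ns ` V)"
    unfolding projective_product_def openin_quotient_topology using sub by auto
qed

lemma ex_less_not_in_image: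
  assumes "inj f" "finite B" "card B < n"
  shows "\<exists>j<n. f j \<notin> B"
proof (rule ccontr)
  assume "\<not> ?thesis"
  then have "f ` {..<n} \<subseteq> B" by auto
  then have "card (f ` {..<n}) \<le> card B"
    using assms(2) by (rule card_mono[rotated])
  then show False
    using assms by (simp add: card_image inj_on_subset)
qed

definition basis_point :: "nat \<Rightarrow> nat \<Rightarrow> real"
  where "basis_point k = (\<lambda>l. if l = k then 1 else 0)"

text \<open>Pairwise distinct points of the great circle in the first two coordinates
  (the rational parametrisation of the unit circle at integer parameters).\<close>
definition circle_point :: "nat \<Rightarrow> nat \<Rightarrow> real"
  where "circle_point j =
    (\<lambda>l. if l = 0 then (1 - (real j)^2) / (1 + (real j)^2)
         else if l = 1 then 2 * real j / (1 + (real j)^2) else 0)"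

lemma basis_point_in_nsphere: "k \<le> n \<Longrightarrow> basis_point k \<in> topspace (nsphere n)"
  by (simp add: topspace_nsphere basis_point_def if_distrib[where f = "\<lambda>x. x^2"] cong: if_cong)

lemma circle_point_in_nsphere:
  assumes "1 \<le> n"
  shows "circle_point j \<in> topspace (nsphere n)"
proof -
  let ?u = "real j"
  have "(1 - ?u^2)^2 + (2 * ?u)^2 = (1 + ?u^2)^2"
    by (simp add: power2_eq_square algebra_simps)
  moreover have "1 + ?u^2 > 0"
    by (simp add: add_pos_nonneg)
  ultimately have "((1 - ?u^2) / (1 + ?u^2))^2 + (2 * ?u / (1 + ?u^2))^2 = 1"
    by (simp add: power_divide flip: add_divide_distrib)
  moreover have "(\<Sum>l\<le>n. (circle_point j l)^2) = (\<Sum>l\<in>{0,1}. (circle_point j l)^2)"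
    using assms by (intro sum.mono_neutral_right) (auto simp: circle_point_def)
  ultimately show ?thesis
    using assms by (simp add: topspace_nsphere circle_point_def)
qed

lemma inj_circle_point: "inj circle_point"
proof (rule injI)
  fix a b assume "circle_point a = circle_point b"
  then have "(1 - (real a)^2) / (1 + (real a)^2) = (1 - (real b)^2) / (1 + (real b)^2)"
    by (metis circle_point_def)
  moreover have "1 + (real a)^2 \<noteq> 0" "1 + (real b)^2 \<noteq> 0"
    by (metis add_pos_nonneg zero_le_power2 zero_less_one less_irrefl)+
  ultimately have "(real a)^2 = (real b)^2"
    by (simp add: frac_eq_eq algebra_simps)
  then show "a = b"
    by (simp add: power2_eq_iff_nonneg)
qed

definition cover_centre :: "nat \<Rightarrow> nat \<Rightarrow> nat \<Rightarrow> nat \<Rightarrow> real"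
  where "cover_centre k j i = (if i = 0 then basis_point k else circle_point j)"

definition cover_patch :: "nat list \<Rightarrow> nat \<Rightarrow> nat \<Rightarrow> (nat \<Rightarrow> nat \<Rightarrow> real) set"
  where "cover_patch ns k j =
    {x \<in> topspace (sphere_product ns). 0 < x 0 k \<and> (\<forall>i<length ns. x i \<noteq> - cover_centre k j i)}"

lemma openin_sphere_product_coordinate_ne:
  assumes i: "i < length ns"
  shows "openin (sphere_product ns) {x \<in> topspace (sphere_product ns). x i \<noteq> v}"
proof -
  have "{x \<in> topspace (sphere_product ns). x i \<noteq> v} =
        (\<Union>l. {x \<in> topspace (sphere_product ns). x i l \<in> - {v l}})"
    by auto
  moreover have "openin (sphere_product ns) {x \<in> topspace (sphere_product ns). x i l \<in> - {v l}}" for l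
    using continuous_map_sphere_product_coordinate[OF i]
    by (rule openin_continuous_map_preimage) (simp add: open_openin[symmetric] open_Compl)
  ultimately show ?thesis by auto
qed

lemma openin_cover_patch:
  assumes "ns \<noteq> []"
  shows "openin (sphere_product ns) (cover_patch ns k j)"
proof -
  let ?X = "sphere_product ns"
  have "cover_patch ns k j = {x \<in> topspace ?X. x 0 k \<in> {0<..}} \<inter>
     ((\<Inter>i\<in>{..<length ns}. {x \<in> topspace ?X. x i \<noteq> - cover_centre k j i}) \<inter> topspace ?X)"
    by (auto simp: cover_patch_def)
  moreover have "openin ?X {x \<in> topspace ?X. x 0 k \<in> {0<..}}"
    using assms by (intro openin_continuous_map_preimage[OF continuous_map_sphere_product_coordinate]) auto
  moreover have "openin ?X ((\<Inter>i\<in>{..<length ns}. {x \<in> topspace ?X. x i \<noteq> - cover_centre k j i}) \<inter> topspace ?X)"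
    by (intro openin_INT) (auto intro: openin_sphere_product_coordinate_ne)
  ultimately show ?thesis by auto
qed

lemma inj_on_antipodal_orbit_cover_patch:
  assumes "ns \<noteq> []"
  shows "inj_on (antipodal_orbit ns) (cover_patch ns k j)"
proof (rule inj_onI)
  fix a b assume a: "a \<in> cover_patch ns k j" and b: "b \<in> cover_patch ns k j"
    and "antipodal_orbit ns a = antipodal_orbit ns b"
  then have "b = a \<or> b = diag_antipodal ns a"
    using antipodal_orbit_eq_iff[of a ns b] by (auto simp: cover_patch_def)
  moreover have "diag_antipodal ns a 0 k = - a 0 k"
    using assms by (simp add: diag_antipodal_def)
  ultimately show "a = b"
    using a b by (auto simp: cover_patch_def)
qed

lemma contractible_in_antipodal_orbit_cover_patch:
  assumes "ns \<noteq> []" "k \<le> ns!0" "\<And>i. i < length ns \<Longrightarrow> 1 \<le> ns!i"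
  shows "contractible_in (projective_product ns) (antipodal_orbit ns ` cover_patch ns k j)"
proof (rule contractible_in_image_open_map[OF continuous_map_antipodal_orbit open_map_antipodal_orbit
      openin_cover_patch inj_on_antipodal_orbit_cover_patch])
  have "cover_centre k j i \<in> topspace (nsphere (ns!i))" if "i < length ns" for i
    using assms that basis_point_in_nsphere circle_point_in_nsphere by (simp add: cover_centre_def)
  then show "contractible_in (sphere_product ns) (cover_patch ns k j)"
    by (rule contractible_in_sphere_product) (auto simp: cover_patch_def)
qed (use assms in auto)

lemma projective_product_covered_by_patches:
  assumes ns: "ns \<noteq> []"
  shows "topspace (projective_product ns) \<subseteq>
           (\<Union>(k, j)\<in>{..ns!0} \<times> {..<length ns}. antipodal_orbit ns ` cover_patch ns k j)"
proof
  fix y assume "y \<in> topspace (projective_product ns)"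
  then obtain x where x: "x \<in> topspace (sphere_product ns)" "y = antipodal_orbit ns x"
    by (auto simp: projective_product_def topspace_quotient_topology)
  have "x 0 \<in> topspace (nsphere (ns!0))"
    using x ns by (auto simp: topspace_sphere_product PiE_iff)
  moreover have "\<not> (\<forall>k\<le>ns!0. x 0 k = 0)"
  proof
    assume "\<forall>k\<le>ns!0. x 0 k = 0"
    with \<open>x 0 \<in> topspace (nsphere (ns!0))\<close> show False
      by (simp add: topspace_nsphere)
  qed
  ultimately obtain k where k: "k \<le> ns!0" "x 0 k \<noteq> 0"
    by blast
  define x' where "x' = (if 0 < x 0 k then x else diag_antipodal ns x)"
  have x': "x' \<in> topspace (sphere_product ns)" "antipodal_orbit ns x' = y" "0 < x' 0 k"
    using x k ns diag_antipodal_in_topspace diag_antipodal_diag_antipodal[OF x(1)]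
    by (auto simp: x'_def diag_antipodal_def)
  let ?B = "(\<lambda>i. - x' i) ` {1..<length ns}"
  have "card ?B < length ns"
    using ns card_image_le[of "{1..<length ns}" "\<lambda>i. - x' i"] by (cases ns) auto
  then obtain j where j: "j < length ns" "circle_point j \<notin> ?B"
    using ex_less_not_in_image[OF inj_circle_point] by blast
  have "x' i \<noteq> - cover_centre k j i" if "i < length ns" for i
  proof (cases "i = 0")
    case True
    then show ?thesis
      using x'(3) by (auto simp: cover_centre_def basis_point_def fun_eq_iff intro!: exI[of _ k])
  next
    case False
    with that have "i \<in> {1..<length ns}" by auto
    then have "circle_point j \<noteq> - x' i"
      using j(2) by blast
    with False show ?thesis
      by (auto simp: cover_centre_def)
  qed
  then have "x' \<in> cover_patch ns k j"
    using x' by (simp add: cover_patch_def)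
  then show "y \<in> (\<Union>(k, j)\<in>{..ns!0} \<times> {..<length ns}. antipodal_orbit ns ` cover_patch ns k j)"
    using k(1) j(1) x'(2) by blast
qed

lemma LS_cover_of_finite_family:
  assumes "finite I" "I \<noteq> {}"
    and "\<And>i. i \<in> I \<Longrightarrow> openin X (V i) \<and> contractible_in X (V i)"
    and "topspace X \<subseteq> (\<Union>i\<in>I. V i)"
  shows "LS_cover X (card I - 1)"
proof -
  obtain h where h: "bij_betw h {0..<card I} I"
    using ex_bij_betw_nat_finite[OF assms(1)] by blast
  have "card I > 0"
    using assms(1,2) by (simp add: card_gt_0_iff)
  then have idx: "{..card I - 1} = {0..<card I}" by auto
  then have I: "I = h ` {..card I - 1}"
    using h by (simp add: bij_betw_def)
  show ?thesis
    unfolding LS_cover_def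
  proof (intro exI[of _ "V \<circ> h"] conjI allI impI)
    fix m assume "m \<le> card I - 1"
    then have "h m \<in> I" using I by blast
    then show "openin X ((V \<circ> h) m)" "contractible_in X ((V \<circ> h) m)"
      using assms(3) by auto
  next
    have "(\<Union>i\<in>I. V i) = (\<Union>m\<le>card I - 1. (V \<circ> h) m)"
      using I by (metis image_image image_comp)
    then show "topspace X \<subseteq> (\<Union>m\<le>card I - 1. (V \<circ> h) m)"
      using assms(4) by simp
  qed
qed

lemma LS_cat_le: "LS_cover X k \<Longrightarrow> LS_cat X \<le> enat k"
  by (auto simp: LS_cat_def intro: Least_le)

theorem mainTheorem13:
  fixes ns :: "nat list"
  assumes "ns \<noteq> []"
    and "sorted ns"
    and "1 \<le> hd ns"
  shows "LS_cat (projective_product ns) < enat ((hd ns + 1) * length ns)"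
proof -
  let ?I = "{..ns!0} \<times> {..<length ns}"
  have hd: "hd ns = ns!0"
    using assms(1) by (simp add: hd_conv_nth)
  have "1 \<le> ns!i" if "i < length ns" for i
    using sorted_nth_mono[OF assms(2), of 0 i] that assms(3) hd by simp
  then have "LS_cover (projective_product ns) (card ?I - 1)"
    using assms(1) contractible_in_antipodal_orbit_cover_patch projective_product_covered_by_patches
    by (intro LS_cover_of_finite_family[where V = "\<lambda>(k, j). antipodal_orbit ns ` cover_patch ns k j"])
      (auto intro: open_map_antipodal_orbit[unfolded open_map_def, rule_format] openin_cover_patch)
  then have "LS_cat (projective_product ns) \<le> enat (card ?I - 1)"
    by (rule LS_cat_le)
  moreover have "card ?I = (hd ns + 1) * length ns"
    using hd by (simp add: card_cartesian_product)
  ultimately show ?thesis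
    using assms(1) by (simp add: order_le_less_trans)
qed

end
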